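(* Let $Z_\phi=\{\gamma_0,\dots,\gamma_{M-1}\}$ ($M\ge1$) be a set of PGTs, indexed so that their minimal allocations satisfy $1\le \mathcal{M}_{0}\le\mathcal{M}_{1}\le\dots\le\mathcal{M}_{M-1}$ (integers), with durations $E_x:=E_{\gamma_x}>0$ and minimum separations $\tau_x:=t^{\mathrm{minsep}}_{\gamma_x}\ge0$. Define $n_0=\mathcal{M}_0-1$, $n_x=\mathcal{M}_x-\mathcal{M}_{x-1}$ for $x\ge1$, $$c_x=\max\Big(\max_{x\le y\le M-1}(E_y+\tau_y),\ \sum_{y=x}^{M-1}E_y\Big),\qquad R(Z_\phi)=\sum_{x=0}^{M-1}\big(n_x c_x+E_x\big).$$ Then for every $t_0\in\mathbb{R}$ there exists a sequentially valid schedule containing exactly $\mathcal{M}_x$ PGAs of $\gamma_x$ for every $x$, all of whose PGAs lie within $[t_0,t_0+R(Z_\phi)]$. In particular $R(Z_\phi)$ upper-bounds the minimum time required to execute a sequentially valid schedule containing $\mathcal{M}_\gamma$ PGAs of every $\gamma\in Z_\phi$.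
   Context: A PGA of a PGT $\gamma$ is a time interval $[s,s+E_\gamma)$ assigned to $\gamma$; a schedule is a finite collection of PGAs. For consecutive PGAs $[s_{x,i},e_{x,i})$, $[s_{x,i+1},e_{x,i+1})$ of the same PGT $\gamma_x$ (ordered by time), a minsep violation occurs if $s_{x,i+1}-e_{x,i}<t^{\mathrm{minsep}}_{\gamma_x}$. A schedule is sequentially valid if no two of its PGAs overlap in time and no minsep violation occurs. *)

theory Defs
  imports Complex_Main
begin

text \<open>A PGA is a pair (x, s): PGT index x and start time s; it occupies
  the time interval [s, s + E x). A schedule is a finite set of PGAs.\<close>

definition pga_interval :: "(nat \<Rightarrow> real) \<Rightarrow> nat \<times> real \<Rightarrow> real set" where
  "pga_interval E p = {snd p ..< snd p + E (fst p)}"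

definition sequentially_valid ::
  "(nat \<Rightarrow> real) \<Rightarrow> (nat \<Rightarrow> real) \<Rightarrow> (nat \<times> real) set \<Rightarrow> bool" where
  "sequentially_valid E tau S \<longleftrightarrow>
     finite S \<and>
     (\<forall>p\<in>S. \<forall>q\<in>S. p \<noteq> q \<longrightarrow> pga_interval E p \<inter> pga_interval E q = {}) \<and>
     (\<forall>x s1 s2. (x, s1) \<in> S \<and> (x, s2) \<in> S \<and> s1 < s2 \<and>
        \<not> (\<exists>s'. (x, s') \<in> S \<and> s1 < s' \<and> s' < s2)
        \<longrightarrow> \<not> (s2 - (s1 + E x) < tau x))"

definition n_coef :: "(nat \<Rightarrow> nat) \<Rightarrow> nat \<Rightarrow> real" where
  "n_coef Mm x = (if x = 0 then real (Mm 0) - 1 else real (Mm x) - real (Mm (x - 1)))"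

definition c_coef :: "nat \<Rightarrow> (nat \<Rightarrow> real) \<Rightarrow> (nat \<Rightarrow> real) \<Rightarrow> nat \<Rightarrow> real" where
  "c_coef M E tau x = max (Max ((\<lambda>y. E y + tau y) ` {x..<M})) (\<Sum>y=x..<M. E y)"

definition R_bound :: "nat \<Rightarrow> (nat \<Rightarrow> nat) \<Rightarrow> (nat \<Rightarrow> real) \<Rightarrow> (nat \<Rightarrow> real) \<Rightarrow> real" where
  "R_bound M Mm E tau = (\<Sum>x<M. n_coef Mm x * c_coef M E tau x + E x)"

end

theory Submission
  imports Defs
begin

text \<open>Group the PGAs into rounds: round \<open>r < \<M>\<^sub>M\<^sub>-\<^sub>1\<close> consists of one PGA of each
  \<open>\<gamma>\<^sub>y\<close> with \<open>r < \<M>\<^sub>y\<close>, that is of \<open>\<gamma>\<^sub>a, \<dots>, \<gamma>\<^sub>M\<^sub>-\<^sub>1\<close> for the least such index \<open>a\<close>,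
  placed back to back. The rounds run in decreasing order of \<open>r\<close>, round \<open>r\<close> in a window of
  length \<open>c\<^sub>a\<close>. The window holds the round because \<open>c\<^sub>a \<ge> E\<^sub>a + \<dots> + E\<^sub>M\<^sub>-\<^sub>1\<close>, and since
  \<open>a\<close> never increases from one round to the next, two PGAs of \<open>\<gamma>\<^sub>y\<close> are at least
  \<open>c\<^sub>a - E\<^sub>y \<ge> \<tau>\<^sub>y\<close> apart. Exactly \<open>n\<^sub>x\<close> of the rounds \<open>r \<ge> 1\<close> have \<open>a = x\<close>, and the final
  round \<open>r = 0\<close> only needs \<open>E\<^sub>0 + \<dots> + E\<^sub>M\<^sub>-\<^sub>1\<close>; this adds up to \<open>R(Z\<^sub>\<phi>)\<close>.\<close>

lemma sequentially_validI:
  assumes "finite S"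
    and "\<And>x s y t. (x, s) \<in> S \<Longrightarrow> (y, t) \<in> S \<Longrightarrow> (x, s) \<noteq> (y, t) \<Longrightarrow>
           s + E x \<le> t \<or> t + E y \<le> s"
    and "\<And>x s1 s2. (x, s1) \<in> S \<Longrightarrow> (x, s2) \<in> S \<Longrightarrow> s1 < s2 \<Longrightarrow> s1 + E x + tau x \<le> s2"
  shows "sequentially_valid E tau S"
proof -
  have "pga_interval E p \<inter> pga_interval E q = {}" if "p \<in> S" "q \<in> S" "p \<noteq> q" for p q
    using assms(2)[of "fst p" "snd p" "fst q" "snd q"] that by (auto simp: pga_interval_def)
  moreover have "\<not> s2 - (s1 + E x) < tau x" if "(x, s1) \<in> S" "(x, s2) \<in> S" "s1 < s2" for x s1 s2
    using assms(3)[OF that] by simp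
  ultimately show ?thesis
    unfolding sequentially_valid_def using assms(1) by blast
qed

lemma c_coef_ge_sum: "sum E {a..<M} \<le> c_coef M E tau a"
  by (simp add: c_coef_def)

lemma c_coef_ge_E_plus_tau:
  assumes "a \<le> y" "y < M"
  shows "E y + tau y \<le> c_coef M E tau a"
proof -
  have "E y + tau y \<le> Max ((\<lambda>y. E y + tau y) ` {a..<M})"
    using assms by (intro Max_ge) auto
  then show ?thesis
    by (simp add: c_coef_def)
qed

locale pgt_family =
  fixes M :: nat and Mm :: "nat \<Rightarrow> nat" and E tau :: "nat \<Rightarrow> real"
  assumes M_pos: "1 \<le> M"
    and Mm_pos: "\<And>x. x < M \<Longrightarrow> 1 \<le> Mm x"
    and Mm_mono: "\<And>x y. x \<le> y \<Longrightarrow> y < M \<Longrightarrow> Mm x \<le> Mm y"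
    and E_pos: "\<And>x. x < M \<Longrightarrow> 0 < E x"
    and tau_nonneg: "\<And>x. x < M \<Longrightarrow> 0 \<le> tau x"
begin

abbreviation c :: "nat \<Rightarrow> real" where
  "c \<equiv> c_coef M E tau"

definition rounds :: nat where
  "rounds = Mm (M - 1)"

definition round_first :: "nat \<Rightarrow> nat" where
  "round_first r = (LEAST x. r < Mm x)"

definition round_offset :: "nat \<Rightarrow> real" where
  "round_offset r = (\<Sum>r'\<in>{r<..<rounds}. c (round_first r'))"

definition round_end :: "nat \<Rightarrow> real" where
  "round_end r = round_offset r + sum E {round_first r..<M}"

definition start_time :: "nat \<Rightarrow> nat \<Rightarrow> real" where
  "start_time y r = round_offset r + sum E {round_first r..<y}"

definition slots :: "(nat \<times> nat) set" where
  "slots = (SIGMA y:{..<M}. {..<Mm y})"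

definition schedule :: "real \<Rightarrow> (nat \<times> real) set" where
  "schedule t0 = (\<lambda>(y, r). (y, t0 + start_time y r)) ` slots"

lemma Mm_le_rounds: "y < M \<Longrightarrow> Mm y \<le> rounds"
  unfolding rounds_def using Mm_mono[of y "M - 1"] by simp

lemma less_rounds:
  assumes "y < M" "r < Mm y"
  shows "r < rounds"
  using assms(2) Mm_le_rounds[OF assms(1)] by (rule less_le_trans)

lemma round_first_le: "r < Mm y \<Longrightarrow> round_first r \<le> y"
  unfolding round_first_def by (rule Least_le)

lemma round_first_bounds:
  assumes "r < rounds"
  shows "round_first r < M" and "r < Mm (round_first r)"
proof -
  have "round_first r \<le> M - 1"
    using assms by (intro round_first_le) (simp add: rounds_def)
  then show "round_first r < M"
    using M_pos by simp
  show "r < Mm (round_first r)"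
    unfolding round_first_def
    by (rule LeastI[of _ "M - 1"]) (use assms in \<open>simp add: rounds_def\<close>)
qed

lemma round_first_mono:
  assumes "r' \<le> r" "r < rounds"
  shows "round_first r' \<le> round_first r"
  using le_less_trans[OF assms(1) round_first_bounds(2)[OF assms(2)]] by (rule round_first_le)

lemma round_first_0: "round_first 0 = 0"
  using round_first_le[of 0 0] Mm_pos[of 0] M_pos by simp

lemma round_first_eq_Suc:
  assumes "Suc x < M" "Mm x \<le> r" "r < Mm (Suc x)"
  shows "round_first r = Suc x"
proof -
  have "round_first r \<le> Suc x"
    using assms(3) by (rule round_first_le)
  moreover have "\<not> round_first r \<le> x"
  proof
    assume "round_first r \<le> x"
    then have "Mm (round_first r) \<le> Mm x"
      using assms(1) by (intro Mm_mono) simp_all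
    moreover have "r < Mm (round_first r)"
      using less_rounds[OF assms(1,3)] by (rule round_first_bounds)
    ultimately show False
      using assms(2) by simp
  qed
  ultimately show ?thesis
    by simp
qed

lemma c_nonneg: "a < M \<Longrightarrow> 0 \<le> c a"
  using c_coef_ge_E_plus_tau[of a a M E tau] E_pos[of a] tau_nonneg[of a] by simp

lemma round_offset_nonneg: "0 \<le> round_offset r"
  unfolding round_offset_def using round_first_bounds(1) c_nonneg by (intro sum_nonneg) auto

lemma round_offset_gap:
  assumes "r' < r" "r < rounds"
  shows "round_offset r + c (round_first r) \<le> round_offset r'"
proof -
  have "round_offset r' = c (round_first r) + (\<Sum>i\<in>{r'<..<rounds} - {r}. c (round_first i))"
    unfolding round_offset_def using assms by (intro sum.remove) auto
  moreover have "round_offset r \<le> (\<Sum>i\<in>{r'<..<rounds} - {r}. c (round_first i))"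
    unfolding round_offset_def using assms round_first_bounds(1) c_nonneg
    by (intro sum_mono2) auto
  ultimately show ?thesis
    by simp
qed

lemma sum_E_mono:
  assumes "a' \<le> a" "b \<le> b'" "b' \<le> M"
  shows "sum E {a..<b} \<le> sum E {a'..<b'}"
  using assms E_pos by (intro sum_mono2) (auto intro: less_imp_le)

lemma sum_E_nonneg: "b \<le> M \<Longrightarrow> 0 \<le> sum E {a..<b}"
  using E_pos by (intro sum_nonneg) (auto intro: less_imp_le)

lemma start_time_end:
  assumes "y < M" "r < Mm y"
  shows "start_time y r + E y \<le> round_end r"
proof -
  have "start_time y r + E y = round_offset r + sum E {round_first r..<Suc y}"
    unfolding start_time_def using round_first_le[OF assms(2)] by simp
  also have "\<dots> \<le> round_end r"
    unfolding round_end_def using assms(1) by (intro add_left_mono sum_E_mono) auto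
  finally show ?thesis .
qed

lemma round_end_le_round_offset:
  assumes "r' < r" "r < rounds"
  shows "round_end r \<le> round_offset r'"
  using c_coef_ge_sum[of E "round_first r" M tau] round_offset_gap[OF assms]
  by (simp add: round_end_def)

lemma start_time_precedes:
  assumes "y1 < M" "r1 < Mm y1" "y2 < M" "r2 < Mm y2"
    and "r2 < r1 \<or> (r1 = r2 \<and> y1 < y2)"
  shows "start_time y1 r1 + E y1 \<le> start_time y2 r2"
proof (cases "r2 < r1")
  case True
  have "start_time y1 r1 + E y1 \<le> round_end r1"
    using assms(1,2) by (rule start_time_end)
  also have "\<dots> \<le> round_offset r2"
    using True less_rounds[OF assms(1,2)] by (rule round_end_le_round_offset)
  also have "\<dots> \<le> start_time y2 r2"
    unfolding start_time_def using assms(3) sum_E_nonneg by simp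
  finally show ?thesis .
next
  case False
  with assms(5) have "r1 = r2" "y1 < y2"
    by auto
  moreover have "sum E {round_first r1..<Suc y1} \<le> sum E {round_first r1..<y2}"
    using \<open>y1 < y2\<close> assms(3) by (intro sum_E_mono) auto
  ultimately show ?thesis
    unfolding start_time_def using round_first_le[OF assms(2)] by simp
qed

lemma start_time_separation:
  assumes "y < M" "r1 < Mm y" "r2 < r1"
  shows "start_time y r1 + E y + tau y \<le> start_time y r2"
proof -
  have r1: "r1 < rounds"
    using assms(1,2) by (rule less_rounds)
  have "E y + tau y \<le> c (round_first r1)"
    using assms by (intro c_coef_ge_E_plus_tau round_first_le)
  moreover have "round_offset r1 + c (round_first r1) \<le> round_offset r2"
    using assms(3) r1 by (rule round_offset_gap)
  moreover have "sum E {round_first r1..<y} \<le> sum E {round_first r2..<y}"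
    using assms(1,3) r1 by (intro sum_E_mono round_first_mono) auto
  ultimately show ?thesis
    unfolding start_time_def by simp
qed

lemma start_time_strict_antimono:
  assumes "y < M" "r1 < Mm y" "r2 < r1"
  shows "start_time y r1 < start_time y r2"
  using start_time_separation[OF assms] E_pos[OF assms(1)] tau_nonneg[OF assms(1)] by simp

lemma sum_over_rounds:
  fixes f :: "nat \<Rightarrow> real"
  assumes "K < M"
  shows "(\<Sum>r\<in>{0<..<Mm K}. f (round_first r)) = (\<Sum>x<Suc K. n_coef Mm x * f x)"
  using assms
proof (induction K)
  case 0
  have "(\<Sum>r\<in>{0<..<Mm 0}. f (round_first r)) = (\<Sum>r\<in>{0<..<Mm 0}. f 0)"
    by (intro sum.cong) (auto dest: round_first_le)
  also have "\<dots> = n_coef Mm 0 * f 0"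
    using Mm_pos[OF 0] by (simp add: n_coef_def of_nat_diff)
  finally show ?case
    by simp
next
  case (Suc K)
  have Mm_Suc: "Mm K \<le> Mm (Suc K)"
    using Suc.prems by (intro Mm_mono) simp_all
  have interval_split: "{0<..<Mm (Suc K)} = {0<..<Mm K} \<union> {Mm K..<Mm (Suc K)}"
    using Mm_Suc Mm_pos[of K] Suc.prems by auto
  have "(\<Sum>r\<in>{Mm K..<Mm (Suc K)}. f (round_first r)) = (\<Sum>r\<in>{Mm K..<Mm (Suc K)}. f (Suc K))"
    using Suc.prems round_first_eq_Suc[of K] by (intro sum.cong) auto
  also have "\<dots> = n_coef Mm (Suc K) * f (Suc K)"
    using Mm_Suc by (simp add: n_coef_def)
  finally have "(\<Sum>r\<in>{0<..<Mm (Suc K)}. f (round_first r))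
      = (\<Sum>r\<in>{0<..<Mm K}. f (round_first r)) + n_coef Mm (Suc K) * f (Suc K)"
    unfolding interval_split by (subst sum.union_disjoint) auto
  then show ?case
    using Suc by simp
qed

lemma R_bound_eq_round_end_0: "R_bound M Mm E tau = round_end 0"
proof -
  have "round_offset 0 = (\<Sum>x<M. n_coef Mm x * c x)"
    unfolding round_offset_def rounds_def
    using sum_over_rounds[of "M - 1" c] M_pos by simp
  then show ?thesis
    unfolding R_bound_def round_end_def
    by (simp add: sum.distrib round_first_0 atLeast0LessThan)
qed

lemma round_end_le_R_bound:
  assumes "r < rounds"
  shows "round_end r \<le> R_bound M Mm E tau"
proof (cases "r = 0")
  case True
  then show ?thesis
    by (simp add: R_bound_eq_round_end_0)
next
  case False
  then have "round_end r \<le> round_offset 0"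
    using assms by (intro round_end_le_round_offset) auto
  also have "\<dots> \<le> round_end 0"
    unfolding round_end_def using sum_E_nonneg by simp
  finally show ?thesis
    by (simp add: R_bound_eq_round_end_0)
qed

lemma mem_schedule_iff:
  "(x, s) \<in> schedule t0 \<longleftrightarrow> (\<exists>r. x < M \<and> r < Mm x \<and> s = t0 + start_time x r)"
  unfolding schedule_def slots_def by auto

lemma finite_schedule: "finite (schedule t0)"
  unfolding schedule_def slots_def by auto

lemma fst_schedule: "fst ` schedule t0 \<subseteq> {..<M}"
  unfolding schedule_def slots_def by auto

lemma card_schedule:
  assumes "x < M"
  shows "card {s. (x, s) \<in> schedule t0} = Mm x"
proof -
  have "{s. (x, s) \<in> schedule t0} = (\<lambda>r. t0 + start_time x r) ` {..<Mm x}"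
    using assms by (auto simp: mem_schedule_iff)
  moreover have "inj_on (\<lambda>r. t0 + start_time x r) {..<Mm x}"
  proof (rule linorder_inj_onI')
    fix i j
    assume "i \<in> {..<Mm x}" "j \<in> {..<Mm x}" "i < j"
    then show "t0 + start_time x i \<noteq> t0 + start_time x j"
      using assms start_time_strict_antimono[of x j i] by simp
  qed
  ultimately show ?thesis
    by (simp add: card_image)
qed

lemma schedule_within:
  assumes "(x, s) \<in> schedule t0"
  shows "t0 \<le> s" and "s + E x \<le> t0 + R_bound M Mm E tau"
proof -
  obtain r where r: "x < M" "r < Mm x" "s = t0 + start_time x r"
    using assms unfolding mem_schedule_iff by blast
  have "0 \<le> sum E {round_first r..<x}"
    using r(1) by (intro sum_E_nonneg) simp
  then show "t0 \<le> s"
    unfolding r start_time_def using round_offset_nonneg[of r] by simp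
  have "start_time x r + E x \<le> R_bound M Mm E tau"
    using start_time_end[OF r(1,2)] round_end_le_R_bound[OF less_rounds[OF r(1,2)]] by simp
  then show "s + E x \<le> t0 + R_bound M Mm E tau"
    using r(3) by simp
qed

lemma sequentially_valid_schedule: "sequentially_valid E tau (schedule t0)"
proof (rule sequentially_validI)
  fix x s y t
  assume "(x, s) \<in> schedule t0" "(y, t) \<in> schedule t0" "(x, s) \<noteq> (y, t)"
  then obtain r q where "x < M" "r < Mm x" "s = t0 + start_time x r"
      "y < M" "q < Mm y" "t = t0 + start_time y q" "(x, r) \<noteq> (y, q)"
    unfolding mem_schedule_iff by blast
  moreover from \<open>(x, r) \<noteq> (y, q)\<close>
  consider "q < r \<or> r = q \<and> x < y" | "r < q \<or> q = r \<and> y < x"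
    by (metis linorder_neqE_nat)
  ultimately show "s + E x \<le> t \<or> t + E y \<le> s"
    using start_time_precedes[of x r y q] start_time_precedes[of y q x r] by cases auto
next
  fix x s1 s2
  assume "(x, s1) \<in> schedule t0" "(x, s2) \<in> schedule t0" "s1 < s2"
  then obtain r1 r2 where r: "x < M" "r1 < Mm x" "s1 = t0 + start_time x r1"
      "r2 < Mm x" "s2 = t0 + start_time x r2"
    unfolding mem_schedule_iff by blast
  have "r2 < r1"
    using \<open>s1 < s2\<close> r start_time_strict_antimono[of x r2 r1]
    by (cases r1 r2 rule: linorder_cases) auto
  then show "s1 + E x + tau x \<le> s2"
    using start_time_separation[OF r(1,2) \<open>r2 < r1\<close>] r(3,5) by simp
qed (rule finite_schedule)

end

theorem mainTheorem4:
  fixes M :: nat and Mm :: "nat \<Rightarrow> nat" and E tau :: "nat \<Rightarrow> real" and t0 :: real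
  assumes "M \<ge> 1"
    and "\<And>x. x < M \<Longrightarrow> 1 \<le> Mm x"
    and "\<And>x y. x \<le> y \<Longrightarrow> y < M \<Longrightarrow> Mm x \<le> Mm y"
    and "\<And>x. x < M \<Longrightarrow> E x > 0"
    and "\<And>x. x < M \<Longrightarrow> tau x \<ge> 0"
  shows "\<exists>S. sequentially_valid E tau S \<and> fst ` S \<subseteq> {..<M} \<and>
           (\<forall>x<M. card {s. (x, s) \<in> S} = Mm x) \<and>
           (\<forall>(x, s)\<in>S. t0 \<le> s \<and> s + E x \<le> t0 + R_bound M Mm E tau)"
proof -
  interpret pgt_family M Mm E tau
    using assms by unfold_locales auto
  show ?thesis
    using sequentially_valid_schedule fst_schedule card_schedule schedule_within
    by (intro exI[of _ "schedule t0"]) auto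
qed

end
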